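(* Let $G$ be an abelian group. Then every characteristic subgroup of $G\oplus G$ is fully invariant in $G\oplus G$.
   Context: A subgroup of an abelian group $K$ is characteristic if it is mapped into itself by every automorphism of $K$, and fully invariant if it is mapped into itself by every endomorphism of $K$. *)

theory Defs
  imports "HOL-Algebra.Algebra"
begin

definition characteristic_subgroup :: "'a set \<Rightarrow> ('a, 'b) monoid_scheme \<Rightarrow> bool" where
  "characteristic_subgroup H K \<longleftrightarrow> subgroup H K \<and> (\<forall>\<phi> \<in> iso K K. \<phi> ` H \<subseteq> H)"

definition fully_invariant_subgroup :: "'a set \<Rightarrow> ('a, 'b) monoid_scheme \<Rightarrow> bool" where
  "fully_invariant_subgroup H K \<longleftrightarrow> subgroup H K \<and> (\<forall>\<phi> \<in> hom K K. \<phi> ` H \<subseteq> H)"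

end

theory Submission
  imports Defs
begin

text \<open>For an endomorphism \<open>f\<close> of \<open>G\<close>, the shear \<open>(x, y) \<mapsto> (x + f y, y)\<close> is an automorphism
  of \<open>G \<oplus> G\<close>, and so is the swap of the two factors. Subtracting \<open>(x, y)\<close> from its image under
  the shear shows that a characteristic subgroup \<open>H\<close> containing \<open>(x, y)\<close> contains \<open>(f y, 0)\<close>,
  and by swapping also \<open>(f x, 0)\<close>, \<open>(0, f x)\<close> and \<open>(0, f y)\<close>. An arbitrary endomorphism of
  \<open>G \<oplus> G\<close> is a \<open>2 \<times> 2\<close> matrix of endomorphisms of \<open>G\<close>, so it maps \<open>(x, y)\<close> to a sum of
  such elements.\<close>

lemma hom_DirProd_split:
  assumes "monoid G" "monoid K" "\<psi> \<in> hom (G \<times>\<times> K) L" "x \<in> carrier G" "y \<in> carrier K"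
  shows "\<psi> (x, y) = \<psi> (x, \<one>\<^bsub>K\<^esub>) \<otimes>\<^bsub>L\<^esub> \<psi> (\<one>\<^bsub>G\<^esub>, y)"
proof -
  have "(x, y) = (x, \<one>\<^bsub>K\<^esub>) \<otimes>\<^bsub>G \<times>\<times> K\<^esub> (\<one>\<^bsub>G\<^esub>, y)"
    using assms by (simp add: monoid.r_one monoid.l_one)
  then show ?thesis
    using assms hom_mult[OF assms(3), of "(x, \<one>\<^bsub>K\<^esub>)" "(\<one>\<^bsub>G\<^esub>, y)"]
    by (simp add: monoid.one_closed)
qed

lemma hom_DirProd_restrict_fst:
  assumes "monoid K" "\<psi> \<in> hom (G \<times>\<times> K) L"
  shows "(\<lambda>x. \<psi> (x, \<one>\<^bsub>K\<^esub>)) \<in> hom G L"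
proof (rule homI)
  fix x y assume "x \<in> carrier G" "y \<in> carrier G"
  then show "\<psi> (x \<otimes>\<^bsub>G\<^esub> y, \<one>\<^bsub>K\<^esub>) = \<psi> (x, \<one>\<^bsub>K\<^esub>) \<otimes>\<^bsub>L\<^esub> \<psi> (y, \<one>\<^bsub>K\<^esub>)"
    using assms hom_mult[OF assms(2), of "(x, \<one>\<^bsub>K\<^esub>)" "(y, \<one>\<^bsub>K\<^esub>)"]
    by (simp add: monoid.one_closed)
qed (use assms in \<open>simp add: hom_in_carrier monoid.one_closed\<close>)

lemma hom_DirProd_restrict_snd:
  assumes "monoid G" "\<psi> \<in> hom (G \<times>\<times> K) L"
  shows "(\<lambda>y. \<psi> (\<one>\<^bsub>G\<^esub>, y)) \<in> hom K L"
proof (rule homI)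
  fix x y assume "x \<in> carrier K" "y \<in> carrier K"
  then show "\<psi> (\<one>\<^bsub>G\<^esub>, x \<otimes>\<^bsub>K\<^esub> y) = \<psi> (\<one>\<^bsub>G\<^esub>, x) \<otimes>\<^bsub>L\<^esub> \<psi> (\<one>\<^bsub>G\<^esub>, y)"
    using assms hom_mult[OF assms(2), of "(\<one>\<^bsub>G\<^esub>, x)" "(\<one>\<^bsub>G\<^esub>, y)"]
    by (simp add: monoid.one_closed)
qed (use assms in \<open>simp add: hom_in_carrier monoid.one_closed\<close>)

lemma (in comm_group) hom_group_inv:
  assumes "f \<in> hom K G"
  shows "(\<lambda>x. inv f x) \<in> hom K G"
  using assms by (auto intro!: homI simp: hom_in_carrier hom_mult inv_mult)

lemma (in comm_group) DirProd_shear_hom: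
  assumes "f \<in> hom K G"
  shows "(\<lambda>(x, y). (x \<otimes> f y, y)) \<in> hom (G \<times>\<times> K) (G \<times>\<times> K)"
  using assms by (auto intro!: homI simp: hom_in_carrier hom_mult m_ac)

lemma (in comm_group) DirProd_shear_iso:
  assumes "f \<in> hom K G"
  shows "(\<lambda>(x, y). (x \<otimes> f y, y)) \<in> iso (G \<times>\<times> K) (G \<times>\<times> K)"
proof (rule group_isomorphisms_imp_iso)
  show "group_isomorphisms (G \<times>\<times> K) (G \<times>\<times> K)
      (\<lambda>(x, y). (x \<otimes> f y, y)) (\<lambda>(x, y). (x \<otimes> inv f y, y))"
    using assms DirProd_shear_hom[OF assms] DirProd_shear_hom[OF hom_group_inv[OF assms]]
    by (auto simp: group_isomorphisms_def hom_in_carrier m_assoc)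
qed

lemma characteristic_subgroup_iso_closed:
  assumes "characteristic_subgroup H K" "\<phi> \<in> iso K K" "h \<in> H"
  shows "\<phi> h \<in> H"
  using assms by (auto simp: characteristic_subgroup_def)

lemma characteristic_subgroup_DirProd_swap:
  assumes "characteristic_subgroup H (G \<times>\<times> G)" "(x, y) \<in> H"
  shows "(y, x) \<in> H"
  using characteristic_subgroup_iso_closed[OF assms(1) DirProd_commute_iso_set assms(2)] by simp

lemma characteristic_subgroup_DirProd_hom_snd:
  fixes G (structure)
  assumes "comm_group G" "characteristic_subgroup H (G \<times>\<times> G)" "f \<in> hom G G" "(x, y) \<in> H"
  shows "(f y, \<one>) \<in> H"
proof -
  interpret comm_group G by fact
  have H: "subgroup H (G \<times>\<times> G)"
    using assms(2) by (simp add: characteristic_subgroup_def)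
  have xy: "x \<in> carrier G" "y \<in> carrier G"
    using subgroup.subset[OF H] assms(4) by auto
  have "(x \<otimes> f y, y) \<in> H"
    using characteristic_subgroup_iso_closed[OF assms(2) DirProd_shear_iso[OF assms(3)] assms(4)]
    by simp
  then have "(x \<otimes> f y, y) \<otimes>\<^bsub>G \<times>\<times> G\<^esub> inv\<^bsub>G \<times>\<times> G\<^esub> (x, y) \<in> H"
    using assms(4) by (simp add: subgroup.m_closed[OF H] subgroup.m_inv_closed[OF H])
  also have "(x \<otimes> f y, y) \<otimes>\<^bsub>G \<times>\<times> G\<^esub> inv\<^bsub>G \<times>\<times> G\<^esub> (x, y) = (f y, \<one>)"
  proof -
    have "f y \<in> carrier G"
      using xy assms(3) by (simp add: hom_in_carrier)
    then show ?thesis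
      using xy is_group by (simp add: m_comm[of x "f y"] m_assoc)
  qed
  finally show ?thesis .
qed

lemma characteristic_subgroup_DirProd_hom_image:
  fixes G (structure)
  assumes "comm_group G" "characteristic_subgroup H (G \<times>\<times> G)" "\<psi> \<in> hom (G \<times>\<times> G) G"
    and "(x, y) \<in> H"
  shows "(\<psi> (x, y), \<one>) \<in> H"
proof -
  interpret comm_group G by fact
  have H: "subgroup H (G \<times>\<times> G)"
    using assms(2) by (simp add: characteristic_subgroup_def)
  have xy: "x \<in> carrier G" "y \<in> carrier G"
    using subgroup.subset[OF H] assms(4) by auto
  have "(\<psi> (x, \<one>), \<one>) \<in> H"
    using characteristic_subgroup_DirProd_hom_snd[OF assms(1,2)
        hom_DirProd_restrict_fst[OF is_monoid assms(3)]
        characteristic_subgroup_DirProd_swap[OF assms(2,4)]] .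
  moreover have "(\<psi> (\<one>, y), \<one>) \<in> H"
    using characteristic_subgroup_DirProd_hom_snd[OF assms(1,2)
        hom_DirProd_restrict_snd[OF is_monoid assms(3)] assms(4)] .
  ultimately have "(\<psi> (x, \<one>), \<one>) \<otimes>\<^bsub>G \<times>\<times> G\<^esub> (\<psi> (\<one>, y), \<one>) \<in> H"
    by (rule subgroup.m_closed[OF H])
  then show ?thesis
    using hom_DirProd_split[OF is_monoid is_monoid assms(3) xy] by simp
qed

theorem lemma2p1:
  fixes G :: "('a, 'b) monoid_scheme" and H :: "('a \<times> 'a) set"
  assumes "comm_group G"
    and "characteristic_subgroup H (G \<times>\<times> G)"
  shows "fully_invariant_subgroup H (G \<times>\<times> G)"
proof -
  interpret comm_group G by fact
  have H: "subgroup H (G \<times>\<times> G)"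
    using assms(2) by (simp add: characteristic_subgroup_def)
  have "\<phi> p \<in> H" if \<phi>: "\<phi> \<in> hom (G \<times>\<times> G) (G \<times>\<times> G)" and p: "p \<in> H" for \<phi> p
  proof -
    have "fst \<circ> \<phi> \<in> hom (G \<times>\<times> G) G" "snd \<circ> \<phi> \<in> hom (G \<times>\<times> G) G"
      using \<phi> by (simp_all add: hom_pairwise)
    then have "(fst (\<phi> p), \<one>\<^bsub>G\<^esub>) \<in> H" "(snd (\<phi> p), \<one>\<^bsub>G\<^esub>) \<in> H"
      using p characteristic_subgroup_DirProd_hom_image[OF assms, of "fst \<circ> \<phi>" "fst p" "snd p"]
        characteristic_subgroup_DirProd_hom_image[OF assms, of "snd \<circ> \<phi>" "fst p" "snd p"]
      by simp_all
    then have "(fst (\<phi> p), \<one>\<^bsub>G\<^esub>) \<in> H" "(\<one>\<^bsub>G\<^esub>, snd (\<phi> p)) \<in> H"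
      using characteristic_subgroup_DirProd_swap[OF assms(2)] by simp_all
    then have "(fst (\<phi> p), \<one>\<^bsub>G\<^esub>) \<otimes>\<^bsub>G \<times>\<times> G\<^esub> (\<one>\<^bsub>G\<^esub>, snd (\<phi> p)) \<in> H"
      by (rule subgroup.m_closed[OF H])
    moreover have "\<phi> p \<in> carrier G \<times> carrier G"
      using hom_in_carrier[OF \<phi>] subgroup.subset[OF H] p by auto
    ultimately show ?thesis by auto
  qed
  then show ?thesis
    using H by (auto simp: fully_invariant_subgroup_def)
qed

end
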